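(* Let $A$ be a ring satisfying the ascending chain condition on semiprime ideals, and let $\varphi: A \to A$ be a surjective ring endomorphism. Then $\ker\varphi$ is contained in the prime radical of $A$.
   Context: The prime radical of $A$ is the intersection of all prime ideals of $A$. For an ideal $J \triangleleft A$, $\sqrt{J}$ is the intersection of the prime ideals containing $J$; $J$ is \emph{semiprime} if $\sqrt J = J$. *)

theory Defs
  imports Main
begin

text \<open>Rings are associative, unital, not necessarily commutative (type class ring_1);
  the ring A is the whole type.\<close>

definition two_sided_ideal :: "'a::ring_1 set \<Rightarrow> bool" where
  "two_sided_ideal I \<longleftrightarrow> 0 \<in> I \<and> (\<forall>x\<in>I. \<forall>y\<in>I. x + y \<in> I) \<and> (\<forall>x\<in>I. - x \<in> I)
     \<and> (\<forall>x\<in>I. \<forall>r. r * x \<in> I \<and> x * r \<in> I)"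

text \<open>Since P is closed under sums, IJ \<subseteq> P iff all
  products a*b with a in I, b in J lie in P.\<close>
definition prime_ideal :: "'a::ring_1 set \<Rightarrow> bool" where
  "prime_ideal P \<longleftrightarrow> two_sided_ideal P \<and> P \<noteq> UNIV \<and>
     (\<forall>I J. two_sided_ideal I \<longrightarrow> two_sided_ideal J \<longrightarrow>
        (\<forall>a\<in>I. \<forall>b\<in>J. a * b \<in> P) \<longrightarrow> I \<subseteq> P \<or> J \<subseteq> P)"

definition prime_radical :: "'a::ring_1 set" where
  "prime_radical = \<Inter> {P. prime_ideal P}"

definition ideal_radical :: "'a::ring_1 set \<Rightarrow> 'a set" where
  "ideal_radical J = \<Inter> {P. prime_ideal P \<and> J \<subseteq> P}"

definition semiprime_ideal :: "'a::ring_1 set \<Rightarrow> bool" where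
  "semiprime_ideal J \<longleftrightarrow> two_sided_ideal J \<and> ideal_radical J = J"

definition acc_semiprime :: "'a::ring_1 itself \<Rightarrow> bool" where
  "acc_semiprime _ \<longleftrightarrow> (\<forall>f :: nat \<Rightarrow> 'a set.
     (\<forall>n. semiprime_ideal (f n)) \<longrightarrow> (\<forall>n. f n \<subseteq> f (Suc n)) \<longrightarrow>
     (\<exists>N. \<forall>n\<ge>N. f n = f N))"

end

theory Submission
  imports Defs
begin

text \<open>Let N be the prime radical. Preimages of prime ideals under the surjective ring
  endomorphism \<phi> are prime, so \<phi>(N) \<subseteq> N and the sets N_n = (\<phi>^n)^-1(N) form an ascending
  chain of intersections of primes, i.e. of semiprime ideals. It becomes stationary at some
  index m. Given \<phi>(x) = 0, write x = \<phi>^m(y); then \<phi>^(m+1)(y) = 0 \<in> N, so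
  y \<in> N_(m+1) = N_m, that is, x \<in> N.\<close>

lemma two_sided_ideal_Inter:
  assumes "\<forall>I\<in>F. two_sided_ideal I"
  shows "two_sided_ideal (\<Inter> F)"
  using assms by (auto simp: two_sided_ideal_def)

lemma two_sided_ideal_eq_UNIV_iff:
  assumes "two_sided_ideal I"
  shows "I = UNIV \<longleftrightarrow> 1 \<in> I"
  using assms unfolding two_sided_ideal_def by (metis UNIV_I mult_1_left subsetI subset_antisym)

lemma semiprime_ideal_Inter_prime:
  assumes "\<forall>P\<in>F. prime_ideal P"
  shows "semiprime_ideal (\<Inter> F)"
proof -
  have "two_sided_ideal (\<Inter> F)"
    using assms by (intro two_sided_ideal_Inter) (simp add: prime_ideal_def)
  moreover have "ideal_radical (\<Inter> F) = \<Inter> F"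
    unfolding ideal_radical_def using assms by blast
  ultimately show ?thesis
    unfolding semiprime_ideal_def by blast
qed

lemma zero_in_prime_radical: "0 \<in> prime_radical"
  by (simp add: prime_radical_def prime_ideal_def two_sided_ideal_def)

locale unital_ring_hom =
  fixes \<psi> :: "'a::ring_1 \<Rightarrow> 'b::ring_1"
  assumes map_add: "\<psi> (x + y) = \<psi> x + \<psi> y"
    and map_mult: "\<psi> (x * y) = \<psi> x * \<psi> y"
    and map_one: "\<psi> 1 = 1"
begin

lemma map_zero: "\<psi> 0 = 0"
  using map_add[of 0 0] by simp

lemma map_uminus: "\<psi> (- x) = - \<psi> x"
proof -
  have "\<psi> x + \<psi> (- x) = 0"
    using map_add[of x "- x"] by (simp add: map_zero)
  then show ?thesis
    by (rule minus_unique[symmetric])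
qed

lemma two_sided_ideal_vimage:
  assumes "two_sided_ideal J"
  shows "two_sided_ideal (\<psi> -` J)"
  using assms unfolding two_sided_ideal_def by (simp add: map_zero map_add map_uminus map_mult)

lemma vimage_proper:
  assumes "two_sided_ideal J" and "J \<noteq> UNIV"
  shows "\<psi> -` J \<noteq> UNIV"
proof -
  have "1 \<notin> \<psi> -` J"
    using assms(2) two_sided_ideal_eq_UNIV_iff[OF assms(1)] map_one by simp
  then show ?thesis
    by blast
qed

end

locale surj_ring_hom = unital_ring_hom +
  assumes surj: "surj \<psi>"
begin

lemma two_sided_ideal_image:
  assumes I: "two_sided_ideal I"
  shows "two_sided_ideal (\<psi> ` I)"
proof -
  have "\<psi> s * \<psi> x \<in> \<psi> ` I \<and> \<psi> x * \<psi> s \<in> \<psi> ` I" if "x \<in> I" for x s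
    using I that unfolding two_sided_ideal_def map_mult[symmetric] by blast
  then have "r * \<psi> x \<in> \<psi> ` I \<and> \<psi> x * r \<in> \<psi> ` I" if "x \<in> I" for x r
    using surj that by (metis surjD)
  then show ?thesis
    using I unfolding two_sided_ideal_def
    by (auto simp flip: map_add map_uminus intro!: image_eqI[where f = \<psi>] map_zero[symmetric])
qed

lemma prime_ideal_vimage:
  assumes P: "prime_ideal P"
  shows "prime_ideal (\<psi> -` P)"
  unfolding prime_ideal_def
proof (intro conjI allI impI)
  show "two_sided_ideal (\<psi> -` P)" "\<psi> -` P \<noteq> UNIV"
    using P two_sided_ideal_vimage vimage_proper unfolding prime_ideal_def by auto
next
  fix I J assume I: "two_sided_ideal I" and J: "two_sided_ideal J"
    and prod: "\<forall>a\<in>I. \<forall>b\<in>J. a * b \<in> \<psi> -` P"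
  have "\<forall>a\<in>\<psi> ` I. \<forall>b\<in>\<psi> ` J. a * b \<in> P"
    using prod by (auto simp: map_mult[symmetric])
  then have "\<psi> ` I \<subseteq> P \<or> \<psi> ` J \<subseteq> P"
    using P I J two_sided_ideal_image unfolding prime_ideal_def by blast
  then show "I \<subseteq> \<psi> -` P \<or> J \<subseteq> \<psi> -` P"
    by auto
qed

lemma image_prime_radical_subset: "\<psi> ` prime_radical \<subseteq> prime_radical"
  using prime_ideal_vimage unfolding prime_radical_def by blast

lemma semiprime_ideal_vimage_prime_radical: "semiprime_ideal (\<psi> -` prime_radical)"
proof -
  have "\<psi> -` prime_radical = \<Inter> ((-`) \<psi> ` {P. prime_ideal P})"
    unfolding prime_radical_def by auto
  then show ?thesis
    by (auto intro!: semiprime_ideal_Inter_prime prime_ideal_vimage)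
qed

end

lemma surj_ring_hom_id: "surj_ring_hom (id :: 'a::ring_1 \<Rightarrow> 'a)"
  by unfold_locales simp_all

lemma surj_ring_hom_comp:
  assumes "surj_ring_hom \<phi>" and "surj_ring_hom \<psi>"
  shows "surj_ring_hom (\<phi> \<circ> \<psi>)"
proof -
  interpret \<phi>: surj_ring_hom \<phi> by fact
  interpret \<psi>: surj_ring_hom \<psi> by fact
  show ?thesis
    by unfold_locales
      (simp_all add: \<phi>.map_add \<psi>.map_add \<phi>.map_mult \<psi>.map_mult \<phi>.map_one \<psi>.map_one
        comp_surj[OF \<psi>.surj \<phi>.surj, unfolded comp_def])
qed

lemma surj_ring_hom_funpow:
  fixes \<phi> :: "'a::ring_1 \<Rightarrow> 'a"
  assumes "surj_ring_hom \<phi>"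
  shows "surj_ring_hom (\<phi> ^^ n)"
proof (induction n)
  case 0
  show ?case
    unfolding funpow.simps(1) by (rule surj_ring_hom_id)
next
  case (Suc n)
  show ?case
    unfolding funpow.simps(2) using assms Suc.IH by (rule surj_ring_hom_comp)
qed

lemma vimage_prime_radical_chain_stabilises:
  assumes "acc_semiprime TYPE('a::ring_1)" and "surj_ring_hom (\<phi> :: 'a \<Rightarrow> 'a)"
  obtains m where "\<forall>n\<ge>m. (\<phi> ^^ n) -` prime_radical = (\<phi> ^^ m) -` prime_radical"
proof -
  interpret surj_ring_hom \<phi> by fact
  define N where "N n = (\<phi> ^^ n) -` prime_radical" for n
  have "\<forall>n. semiprime_ideal (N n)"
    unfolding N_def
    using surj_ring_hom.semiprime_ideal_vimage_prime_radical[OF surj_ring_hom_funpow[OF assms(2)]] ..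
  moreover have "\<forall>n. N n \<subseteq> N (Suc n)"
  proof
    fix n
    have "prime_radical \<subseteq> \<phi> -` prime_radical"
      using image_prime_radical_subset by (simp add: image_subset_iff_subset_vimage)
    then show "N n \<subseteq> N (Suc n)"
      unfolding N_def funpow.simps(2) vimage_comp[symmetric] by (rule vimage_mono)
  qed
  ultimately obtain m where m: "\<forall>n\<ge>m. N n = N m"
    using assms(1) unfolding acc_semiprime_def by blast
  from m show ?thesis
    unfolding N_def by (rule that)
qed

theorem mainTheorem10:
  fixes \<phi> :: "'a::ring_1 \<Rightarrow> 'a"
  assumes "acc_semiprime TYPE('a)"
    and "\<And>x y. \<phi> (x + y) = \<phi> x + \<phi> y"
    and "\<And>x y. \<phi> (x * y) = \<phi> x * \<phi> y"
    and "\<phi> 1 = 1"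
    and "surj \<phi>"
  shows "{x. \<phi> x = 0} \<subseteq> prime_radical"
proof
  have hom: "surj_ring_hom \<phi>"
    using assms(2-5) by unfold_locales
  obtain m where m: "\<forall>n\<ge>m. (\<phi> ^^ n) -` prime_radical = (\<phi> ^^ m) -` prime_radical"
    by (rule vimage_prime_radical_chain_stabilises[OF assms(1) hom])
  fix x assume "x \<in> {x. \<phi> x = 0}"
  then have "\<phi> x = 0" by simp
  obtain y where y: "x = (\<phi> ^^ m) y"
    using surj_ring_hom.surj[OF surj_ring_hom_funpow[OF hom]] by (metis surjD)
  have "(\<phi> ^^ Suc m) y = 0"
    using \<open>\<phi> x = 0\<close> y by simp
  then have "y \<in> (\<phi> ^^ Suc m) -` prime_radical"
    using zero_in_prime_radical by simp
  then have "y \<in> (\<phi> ^^ m) -` prime_radical"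
    unfolding m[rule_format, OF le_SucI[OF order_refl]] .
  then show "x \<in> prime_radical"
    using y by simp
qed

end
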